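(* Let $\langle P,\wedge,\vee,0,1,\circ\rangle$ be a universale such that $\circ$ is idempotent ($a\circ a=a$ for all $a\in P$) and the identity element of the monoid $\langle P,\circ\rangle$ equals the least element $0$ of the lattice. Then $\langle P,\wedge,\vee,0,1\rangle$ is a globale.
   Context: A universale is a structure $\langle P,\wedge,\vee,0,1,\circ\rangle$ such that: (1) $\langle P,\wedge,\vee\rangle$ is a complete lattice with least element $0$ and greatest element $1$; (2) $\langle P,\circ\rangle$ is a monoid with some identity element $0'$; (3) for every $b\in P$ and every $T\subseteq P$, $b\circ\bigwedge T=\bigwedge\{b\circ t\mid t\in T\}$ and $(\bigwedge T)\circ b=\bigwedge\{t\circ b\mid t\in T\}$. A globale is a complete lattice $\langle L,\wedge,\vee,0,1\rangle$ such that for all $w\in L$ and all $Z\subseteq L$, $w\vee\bigwedge Z=\bigwedge\{w\vee z\mid z\in Z\}$. *)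

theory Defs
  imports Main
begin

text \<open>A universale: the complete lattice structure is that of the type class
complete_lattice (bot = 0, top = 1, Inf = big meet); mult is the monoid operation (named mult).\<close>

definition universale :: "('a::complete_lattice \<Rightarrow> 'a \<Rightarrow> 'a) \<Rightarrow> bool" where
  "universale mult \<longleftrightarrow>
     (\<forall>a b c. mult (mult a b) c = mult a (mult b c)) \<and>
     (\<exists>e. \<forall>a. mult e a = a \<and> mult a e = a) \<and>
     (\<forall>b T. mult b (Inf T) = Inf ((\<lambda>t. mult b t) ` T) \<and>
            mult (Inf T) b = Inf ((\<lambda>t. mult t b) ` T))"

definition globale :: "'a::complete_lattice itself \<Rightarrow> bool" where
  "globale _ \<longleftrightarrow> (\<forall>(w::'a) Z. sup w (Inf Z) = Inf ((\<lambda>z. sup w z) ` Z))"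

end

theory Submission
  imports Defs
begin

text \<open>Preservation of meets makes the multiplication monotone in each argument. Then
  a \<circ> b lies between a \<circ> 0 = a and 0 \<circ> b = b from above, and below
  (a \<squnion> b) \<circ> (a \<squnion> b) = a \<squnion> b, so \<circ> is the join. The
  distributivity of \<circ> over arbitrary meets is therefore that of \<squnion>.\<close>

lemma Inf_preserving_mono:
  fixes f :: "'a::complete_lattice \<Rightarrow> 'b::complete_lattice"
  assumes "\<And>T. f (Inf T) = Inf (f ` T)"
  shows "mono f"
proof
  fix a b :: 'a
  assume "a \<le> b"
  then have "f a = Inf {f a, f b}"
    using assms[of "{a, b}"] by (simp add: inf_absorb1)
  then show "f a \<le> f b"
    by (simp add: le_iff_inf)
qed

lemma idempotent_mono_mult_eq_sup:
  fixes mult :: "'a::lattice \<Rightarrow> 'a \<Rightarrow> 'a"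
  assumes mono_left: "\<And>c. mono (\<lambda>a. mult a c)"
    and mono_right: "\<And>c. mono (mult c)"
    and idem: "\<And>a. mult a a = a"
    and unit: "\<And>a. mult u a = a \<and> mult a u = a"
    and least: "\<And>a. u \<le> a"
  shows "mult a b = sup a b"
proof (rule antisym)
  have "mult a b \<le> mult (sup a b) b"
    using monoD[OF mono_left] by simp
  also have "\<dots> \<le> mult (sup a b) (sup a b)"
    using monoD[OF mono_right] by simp
  finally show "mult a b \<le> sup a b"
    using idem by simp
  have "a \<le> mult a b"
    using monoD[OF mono_right, of u b a] unit least by simp
  moreover have "b \<le> mult a b"
    using monoD[OF mono_left, of u a b] unit least by simp
  ultimately show "sup a b \<le> mult a b"
    by simp
qed

lemma globaleI:
  assumes "\<And>(w::'a::complete_lattice) Z. sup w (Inf Z) = Inf ((\<lambda>z. sup w z) ` Z)"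
  shows "globale TYPE('a)"
  using assms unfolding globale_def by blast

theorem mainTheorem5:
  fixes mult :: "'a::complete_lattice \<Rightarrow> 'a \<Rightarrow> 'a"
  assumes "universale mult"
    and "\<forall>a. mult a a = a"
    and "\<forall>a. mult bot a = a \<and> mult a bot = a"
  shows "globale TYPE('a)"
proof -
  have Inf_right: "\<And>b T. mult b (Inf T) = Inf (mult b ` T)"
    and Inf_left: "\<And>b T. mult (Inf T) b = Inf ((\<lambda>t. mult t b) ` T)"
    using assms(1) unfolding universale_def by auto
  have mult_eq_sup: "mult a b = sup a b" for a b
  proof (rule idempotent_mono_mult_eq_sup[where u = bot])
    show "mono (\<lambda>a. mult a c)" for c
      by (rule Inf_preserving_mono) (rule Inf_left)
    show "mono (mult c)" for c
      by (rule Inf_preserving_mono) (rule Inf_right)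
  qed (use assms(2,3) in auto)
  show ?thesis
    using Inf_right by (intro globaleI) (simp add: mult_eq_sup[abs_def])
qed

end
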